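(* Let $A \in L(H)$, $x \in H$ and $u \in H^{\mathbb{Z}}$. Then the following are equivalent: (i) $\tau u = A u + \delta_{-1}x$ and $\operatorname{spt} u \subseteq \mathbb{Z}_{\geq 0}$; (ii) $u_{n+1} = A u_n$ for all $n \in \mathbb{Z}_{\geq 0}$, $u_0 = x$, and $u_n = 0$ for all $n \in \mathbb{Z}_{<0}$; (iii) $u_n = 0$ for $n < 0$ and $u_n = A^n x$ for $n \geq 0$. Moreover, if $\rho > r(A)$, then (i), (ii), (iii) are also equivalent to each of: (iv) $\tau u = A u + \delta_{-1}x$ and $u \in \ell_{2,\rho}(\mathbb{Z}; H)$; (v) $u = (\tau - A)^{-1} \delta_{-1} x \in \ell_{2,\rho}(\mathbb{Z}; H)$, where $(\tau-A)^{-1}$ denotes the inverse of $\tau - A$ in $L(\ell_{2,\rho}(\mathbb{Z};H))$.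
   Context: $H$ is a separable complex Hilbert space. $\tau$ is the shift $(\tau u)_n = u_{n+1}$ on $H^{\mathbb{Z}}$; $Au = (Au_n)_{n\in\mathbb{Z}}$; $\delta_{-1}x$ is the sequence with entry $x$ at index $-1$ and $0$ elsewhere; $\operatorname{spt} u = \{n : u_n\neq 0\}$. $r(A)$ is the spectral radius of $A$. $\ell_{2,\rho}(\mathbb{Z}; H) = \{u \in H^{\mathbb{Z}} : \sum_{k} |u_k|_H^2 \rho^{-2k} < \infty\}$. *)

theory Defs
  imports "HOL-Analysis.Analysis"
begin

class complex_vector = real_vector +
  fixes scaleC :: "complex \<Rightarrow> 'a \<Rightarrow> 'a"  (infixr \<open>*\<^sub>C\<close> 75)
  assumes scaleC_add_right: "a *\<^sub>C (x + y) = a *\<^sub>C x + a *\<^sub>C y"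
    and scaleC_add_left: "(a + b) *\<^sub>C x = a *\<^sub>C x + b *\<^sub>C x"
    and scaleC_scaleC: "a *\<^sub>C (b *\<^sub>C x) = (a * b) *\<^sub>C x"
    and scaleC_one: "1 *\<^sub>C x = x"
    and scaleR_scaleC: "scaleR r x = complex_of_real r *\<^sub>C x"

class complex_normed_vector = complex_vector + real_normed_vector +
  assumes norm_scaleC: "norm (a *\<^sub>C x) = cmod a * norm x"

class complex_inner = complex_normed_vector +
  fixes cinner :: "'a \<Rightarrow> 'a \<Rightarrow> complex"
  assumes cinner_commute: "cinner x y = cnj (cinner y x)"
    and cinner_add_left: "cinner (x + y) z = cinner x z + cinner y z"
    and cinner_scaleC_left: "cinner (a *\<^sub>C x) y = cnj a * cinner x y"
    and cinner_norm: "cinner x x = complex_of_real ((norm x)\<^sup>2)"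

text \<open>Complex Hilbert space: complete complex inner product space.
  Separability is expressed by the class \<open>second_countable_topology\<close>
  (for metric spaces, separable iff second countable).\<close>

class chilbert_space = complex_inner + complete_space

definition clinear :: "('a::complex_vector \<Rightarrow> 'b::complex_vector) \<Rightarrow> bool" where
  "clinear f \<longleftrightarrow> (\<forall>x y. f (x + y) = f x + f y) \<and> (\<forall>c x. f (c *\<^sub>C x) = c *\<^sub>C f x)"

definition bounded_clinear :: "('a::complex_normed_vector \<Rightarrow> 'b::complex_normed_vector) \<Rightarrow> bool" where
  "bounded_clinear f \<longleftrightarrow> clinear f \<and> (\<exists>K. \<forall>x. norm (f x) \<le> norm x * K)"

definition op_spectrum :: "('a::complex_normed_vector \<Rightarrow> 'a) \<Rightarrow> complex set" where
  "op_spectrum A = {l. \<not> (\<exists>B. bounded_clinear B \<and>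
       (\<forall>x. B (l *\<^sub>C x - A x) = x) \<and> (\<forall>y. l *\<^sub>C B y - A (B y) = y))}"

definition spectral_radius :: "('a::complex_normed_vector \<Rightarrow> 'a) \<Rightarrow> real" where
  "spectral_radius A = Sup (cmod ` op_spectrum A)"

definition shift :: "(int \<Rightarrow> 'a) \<Rightarrow> int \<Rightarrow> 'a" where
  "shift u = (\<lambda>n. u (n + 1))"

definition delta_m1 :: "'a::zero \<Rightarrow> int \<Rightarrow> 'a" where
  "delta_m1 x = (\<lambda>n. if n = -1 then x else 0)"

definition spt :: "(int \<Rightarrow> 'a::zero) \<Rightarrow> int set" where
  "spt u = {n. u n \<noteq> 0}"

definition l2rho :: "real \<Rightarrow> (int \<Rightarrow> 'a::real_normed_vector) set" where
  "l2rho \<rho> = {u. (\<lambda>k. (norm (u k))\<^sup>2 * \<rho> powi (-2 * k)) summable_on UNIV}"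

definition l2rho_norm :: "real \<Rightarrow> (int \<Rightarrow> 'a::real_normed_vector) \<Rightarrow> real" where
  "l2rho_norm \<rho> u = sqrt (\<Sum>\<^sub>\<infinity>k. (norm (u k))\<^sup>2 * \<rho> powi (-2 * k))"

definition is_l2rho_inverse ::
  "real \<Rightarrow> ((int \<Rightarrow> 'a::complex_normed_vector) \<Rightarrow> (int \<Rightarrow> 'a)) \<Rightarrow> ((int \<Rightarrow> 'a) \<Rightarrow> (int \<Rightarrow> 'a)) \<Rightarrow> bool" where
  "is_l2rho_inverse \<rho> R T \<longleftrightarrow>
     (\<forall>v \<in> l2rho \<rho>. R v \<in> l2rho \<rho>) \<and>
     (\<forall>v \<in> l2rho \<rho>. \<forall>w \<in> l2rho \<rho>. R (\<lambda>n. v n + w n) = (\<lambda>n. R v n + R w n)) \<and>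
     (\<forall>v \<in> l2rho \<rho>. \<forall>c. R (\<lambda>n. c *\<^sub>C v n) = (\<lambda>n. c *\<^sub>C R v n)) \<and>
     (\<exists>K. \<forall>v \<in> l2rho \<rho>. l2rho_norm \<rho> (R v) \<le> K * l2rho_norm \<rho> v) \<and>
     (\<forall>v \<in> l2rho \<rho>. T (R v) = v) \<and>
     (\<forall>v \<in> l2rho \<rho>. R (T v) = v)"

end

theory Submission
  imports Defs "HOL-Complex_Analysis.Complex_Analysis"
begin

text \<open>
  For \<open>\<rho> > r(A)\<close> the key estimate is \<open>\<parallel>A\<^sup>n\<parallel> \<le> M s\<^sup>n\<close> for some \<open>s < \<rho>\<close>.  It comes from
  Cauchy's estimates for the scalar functions \<open>w \<mapsto> \<langle>y, (1 - wA)\<^sup>-\<^sup>1 x\<rangle>\<close>: they are holomorphic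
  on the disc \<open>|w| r(A) < 1\<close>, their Taylor coefficients at \<open>0\<close> are \<open>\<langle>y, A\<^sup>n x\<rangle>\<close> (Neumann
  series), and by compactness they are bounded on the circle \<open>|w| = 1/s\<close> uniformly in
  \<open>\<parallel>x\<parallel>, \<parallel>y\<parallel> \<le> 1\<close>.  Given the estimate, \<open>(R v)\<^sub>n = \<Sum>\<^sub>j\<^sub>\<ge>\<^sub>0 A\<^sup>j v\<^sub>n\<^sub>-\<^sub>1\<^sub>-\<^sub>j\<close> converges and, by
  Young's inequality for the kernel \<open>(s/\<rho>)\<^sup>j\<close>, is a bounded two-sided inverse of \<open>\<tau> - A\<close> on
  \<open>\<ell>\<^sub>2\<^sub>,\<^sub>\<rho>\<close>.  Hence \<open>\<tau> - A\<close> is injective there and the unique solution of (iv) and (v) is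
  \<open>R \<delta>\<^sub>-\<^sub>1 x\<close>, which is the sequence of (iii).
\<close>

context chilbert_space begin
subclass banach ..
end

lemma scaleC_zero_left [simp]: "0 *\<^sub>C (x::'a::complex_vector) = 0"
  by (metis add_cancel_right_right add_0 scaleC_add_left)

lemma scaleC_diff_right: "c *\<^sub>C (x - y) = c *\<^sub>C x - c *\<^sub>C (y::'a::complex_vector)"
  by (metis add_diff_cancel diff_add_cancel scaleC_add_right)

lemma scaleC_diff_left: "(a - b) *\<^sub>C x = a *\<^sub>C x - b *\<^sub>C (x::'a::complex_vector)"
  by (metis add_diff_cancel diff_add_cancel scaleC_add_left)

lemma bounded_clinear_iff:
  "bounded_clinear f \<longleftrightarrow> bounded_linear f \<and> (\<forall>c x. f (c *\<^sub>C x) = c *\<^sub>C f x)"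
proof
  assume "bounded_clinear f"
  then have add: "f (x + y) = f x + f y" and scale: "f (c *\<^sub>C x) = c *\<^sub>C f x"
    and bound: "\<exists>K. \<forall>x. norm (f x) \<le> norm x * K" for x y c
    by (auto simp: bounded_clinear_def clinear_def)
  obtain K where "\<And>x. norm (f x) \<le> norm x * K"
    using bound by blast
  then have "bounded_linear f"
    by (intro bounded_linear_intro[where K=K] add) (auto simp: scale scaleR_scaleC)
  with scale show "bounded_linear f \<and> (\<forall>c x. f (c *\<^sub>C x) = c *\<^sub>C f x)" by blast
next
  assume f: "bounded_linear f \<and> (\<forall>c x. f (c *\<^sub>C x) = c *\<^sub>C f x)"
  then show "bounded_clinear f"
    using linear_add[OF bounded_linear.linear] bounded_linear.bounded[of f]
    by (fastforce simp: bounded_clinear_def clinear_def mult.commute)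
qed

lemma bounded_clinear_imp_bounded_linear: "bounded_clinear f \<Longrightarrow> bounded_linear f"
  by (simp add: bounded_clinear_iff)

lemma bounded_clinear_scaleC_apply: "bounded_clinear f \<Longrightarrow> f (c *\<^sub>C x) = c *\<^sub>C f x"
  by (simp add: bounded_clinear_iff)

lemma bounded_clinear_ident: "bounded_clinear (\<lambda>x. x)"
  by (simp add: bounded_clinear_iff)

lemma bounded_clinear_compose:
  "bounded_clinear f \<Longrightarrow> bounded_clinear g \<Longrightarrow> bounded_clinear (\<lambda>x. f (g x))"
  by (simp add: bounded_clinear_iff bounded_linear_compose)

lemma bounded_clinear_scaleC: "bounded_clinear (\<lambda>x::'a::complex_normed_vector. c *\<^sub>C x)"
proof -
  have "bounded_linear (\<lambda>x::'a. c *\<^sub>C x)"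
    by (rule bounded_linear_intro[where K="cmod c"])
      (auto simp: scaleC_add_right scaleR_scaleC scaleC_scaleC norm_scaleC mult.commute)
  then show ?thesis by (simp add: bounded_clinear_iff scaleC_scaleC mult.commute)
qed

lemma cinner_add_right: "cinner x (y + z) = cinner x y + cinner x (z::'a::complex_inner)"
  by (metis cinner_add_left cinner_commute complex_cnj_add)

lemma cinner_scaleC_right: "cinner x (c *\<^sub>C y) = c * cinner x (y::'a::complex_inner)"
  by (metis cinner_commute cinner_scaleC_left complex_cnj_cnj complex_cnj_mult)

lemma cinner_diff_left: "cinner (x - y) z = cinner x z - cinner y (z::'a::complex_inner)"
  by (metis add_diff_cancel diff_add_cancel cinner_add_left)

lemma cinner_diff_right: "cinner x (y - z) = cinner x y - cinner x (z::'a::complex_inner)"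
  by (metis add_diff_cancel diff_add_cancel cinner_add_right)

lemma norm_cinner_self: "cmod (cinner x x) = (norm (x::'a::complex_inner))\<^sup>2"
  by (simp only: cinner_norm norm_of_real) simp

text \<open>Cauchy--Schwarz, from \<open>0 \<le> \<parallel>y - t x\<parallel>\<^sup>2\<close> with \<open>t = \<langle>x, y\<rangle> / \<parallel>x\<parallel>\<^sup>2\<close>.\<close>

lemma norm_cinner_le: "cmod (cinner x y) \<le> norm x * norm (y::'a::complex_inner)"
proof (cases "x = 0")
  case True
  then show ?thesis
    using cinner_scaleC_left[of 0 0 y] by simp
next
  case False
  define N where "N = (norm x)\<^sup>2"
  define a where "a = cinner x y"
  define t where "t = a / complex_of_real N"
  have N: "N > 0" using False by (simp add: N_def)
  have expand: "cinner (y - t *\<^sub>C x) (y - t *\<^sub>C x) =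
     cinner y y - t * cinner y x - cnj t * cinner x y + cnj t * t * cinner x x"
    by (simp add: cinner_diff_left cinner_diff_right cinner_scaleC_left cinner_scaleC_right
        algebra_simps)
  have "a * cnj a = complex_of_real ((cmod a)\<^sup>2)"
    by (metis complex_norm_square of_real_power)
  then have "t * cinner y x = complex_of_real ((cmod a)\<^sup>2 / N)"
    and "cnj t * cinner x y = complex_of_real ((cmod a)\<^sup>2 / N)"
    and "cnj t * t * cinner x x = complex_of_real ((cmod a)\<^sup>2 / N)"
    using N cinner_commute[of y x]
    by (simp_all add: t_def a_def N_def cinner_norm field_simps mult.commute)
  then have "cinner (y - t *\<^sub>C x) (y - t *\<^sub>C x) = complex_of_real ((norm y)\<^sup>2 - (cmod a)\<^sup>2 / N)"
    using expand by (simp add: cinner_norm[of y])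
  then have "(norm (y - t *\<^sub>C x))\<^sup>2 = (norm y)\<^sup>2 - (cmod a)\<^sup>2 / N"
    by (metis cinner_norm of_real_eq_iff)
  then have "(cmod a)\<^sup>2 / N \<le> (norm y)\<^sup>2"
    by (metis diff_ge_0_iff_ge zero_le_power2)
  then have "(cmod a)\<^sup>2 \<le> (norm x * norm y)\<^sup>2"
    using N by (simp add: field_simps power_mult_distrib N_def)
  then show ?thesis
    unfolding a_def by (meson mult_nonneg_nonneg norm_ge_zero power2_le_imp_le)
qed

lemma bounded_linear_cinner_right: "bounded_linear (\<lambda>z. cinner y (z::'a::complex_inner))"
proof (rule bounded_linear_intro[where K="norm y"])
  show "cinner y (a + b) = cinner y a + cinner y b" for a b
    by (rule cinner_add_right)
  show "cinner y (r *\<^sub>R a) = r *\<^sub>R cinner y a" for r a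
    by (simp add: scaleR_scaleC cinner_scaleC_right scaleR_conv_of_real)
  show "norm (cinner y a) \<le> norm a * norm y" for a
    using norm_cinner_le[of y a] by (simp add: mult.commute)
qed

section \<open>Neumann series and the spectral radius\<close>

definition bounded_clinear_inverse ::
  "('b::complex_normed_vector \<Rightarrow> 'a::complex_normed_vector) \<Rightarrow> ('a \<Rightarrow> 'b) \<Rightarrow> bool" where
  "bounded_clinear_inverse S T \<longleftrightarrow> bounded_clinear S \<and> (\<forall>x. S (T x) = x) \<and> (\<forall>y. T (S y) = y)"

lemma bounded_clinear_inverse_scaleC:
  assumes "bounded_clinear_inverse S T" and "c \<noteq> 0"
  shows "bounded_clinear_inverse (\<lambda>y. S (inverse c *\<^sub>C y)) (\<lambda>x. c *\<^sub>C T x)"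
  using assms bounded_clinear_compose[OF _ bounded_clinear_scaleC, of S "inverse c"]
  by (simp add: bounded_clinear_inverse_def scaleC_scaleC scaleC_one)

lemma not_in_op_spectrum_iff:
  fixes A :: "'a::complex_normed_vector \<Rightarrow> 'a"
  assumes "l \<noteq> 0"
  shows "l \<notin> op_spectrum A \<longleftrightarrow> (\<exists>S. bounded_clinear_inverse S (\<lambda>x. x - inverse l *\<^sub>C A x))"
proof -
  have factor: "(\<lambda>x. l *\<^sub>C x - A x) = (\<lambda>x. l *\<^sub>C (x - inverse l *\<^sub>C A x))"
    and unfactor: "(\<lambda>x. x - inverse l *\<^sub>C A x) = (\<lambda>x. inverse l *\<^sub>C (l *\<^sub>C x - A x))"
    using assms by (simp_all add: scaleC_diff_right scaleC_scaleC scaleC_one)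
  have "l \<notin> op_spectrum A \<longleftrightarrow> (\<exists>B. bounded_clinear_inverse B (\<lambda>x. l *\<^sub>C x - A x))"
    by (simp add: op_spectrum_def bounded_clinear_inverse_def)
  also have "\<dots> \<longleftrightarrow> (\<exists>S. bounded_clinear_inverse S (\<lambda>x. x - inverse l *\<^sub>C A x))"
    using bounded_clinear_inverse_scaleC[of _ "\<lambda>x. l *\<^sub>C x - A x" "inverse l"]
      bounded_clinear_inverse_scaleC[of _ "\<lambda>x. x - inverse l *\<^sub>C A x" l] assms
    by (auto simp: factor[symmetric] unfactor[symmetric])
  finally show ?thesis .
qed

locale bounded_clinear_op =
  fixes A :: "'a::{complex_normed_vector, banach} \<Rightarrow> 'a"
  assumes bounded_clinear_A: "bounded_clinear A"
begin

sublocale A: bounded_linear A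
  by (rule bounded_clinear_imp_bounded_linear[OF bounded_clinear_A])

lemma A_scaleC: "A (c *\<^sub>C x) = c *\<^sub>C A x"
  by (rule bounded_clinear_scaleC_apply[OF bounded_clinear_A])

lemma norm_A_le: "norm (A x) \<le> onorm A * norm x"
  by (rule onorm[OF A.bounded_linear_axioms])

lemma onorm_A_nonneg: "0 \<le> onorm A"
  by (rule onorm_pos_le[OF A.bounded_linear_axioms])

lemma bounded_clinear_funpow: "bounded_clinear (A ^^ n)"
  by (induction n) (auto simp: bounded_clinear_ident bounded_clinear_compose[OF bounded_clinear_A])

lemma bounded_linear_funpow: "bounded_linear (A ^^ n)"
  by (rule bounded_clinear_imp_bounded_linear[OF bounded_clinear_funpow])

lemma norm_funpow_le: "norm ((A ^^ n) x) \<le> onorm A ^ n * norm x"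
proof (induction n)
  case (Suc n)
  have "norm ((A ^^ Suc n) x) \<le> onorm A * norm ((A ^^ n) x)"
    by (simp add: norm_A_le)
  also have "\<dots> \<le> onorm A * (onorm A ^ n * norm x)"
    by (rule mult_left_mono[OF Suc onorm_A_nonneg])
  finally show ?case by (simp add: mult.assoc)
qed simp

definition neumann :: "complex \<Rightarrow> 'a \<Rightarrow> 'a" where
  "neumann w x = (\<Sum>n. (w ^ n) *\<^sub>C (A ^^ n) x)"

lemma norm_neumann_term_le: "norm ((w ^ n) *\<^sub>C (A ^^ n) x) \<le> (cmod w * onorm A) ^ n * norm x"
  using mult_left_mono[OF norm_funpow_le, of "cmod w ^ n" n x]
  by (simp add: norm_scaleC norm_power power_mult_distrib mult.assoc)

context
  fixes w :: complex
  assumes small: "cmod w * onorm A < 1"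
begin

lemma summable_norm_neumann: "summable (\<lambda>n. norm ((w ^ n) *\<^sub>C (A ^^ n) x))"
proof (rule summable_comparison_test')
  show "summable (\<lambda>n. (cmod w * onorm A) ^ n * norm x)"
    using small onorm_A_nonneg by (intro summable_mult2 summable_geometric) auto
qed (simp add: norm_neumann_term_le)

lemma summable_neumann: "summable (\<lambda>n. (w ^ n) *\<^sub>C (A ^^ n) x)"
  by (rule summable_norm_cancel[OF summable_norm_neumann])

lemma norm_neumann_le: "norm (neumann w x) \<le> norm x / (1 - cmod w * onorm A)"
proof -
  have "norm (neumann w x) \<le> (\<Sum>n. norm ((w ^ n) *\<^sub>C (A ^^ n) x))"
    unfolding neumann_def by (rule summable_norm[OF summable_norm_neumann])
  also have "\<dots> \<le> (\<Sum>n. (cmod w * onorm A) ^ n * norm x)"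
    using small onorm_A_nonneg
    by (intro suminf_le norm_neumann_term_le summable_norm_neumann summable_mult2 summable_geometric)
      auto
  also have "\<dots> = norm x / (1 - cmod w * onorm A)"
    using small onorm_A_nonneg by (simp add: suminf_mult2[symmetric] suminf_geometric)
  finally show ?thesis .
qed

lemma neumann_A: "neumann w (A x) = A (neumann w x)"
  unfolding neumann_def
  by (simp add: A.suminf[OF summable_neumann] A_scaleC funpow_swap1)

lemma neumann_scaleC: "neumann w (c *\<^sub>C x) = c *\<^sub>C neumann w x"
  unfolding neumann_def
  by (simp add: bounded_clinear_scaleC_apply[OF bounded_clinear_funpow] scaleC_scaleC mult.commute
      bounded_linear.suminf[OF bounded_clinear_imp_bounded_linear[OF bounded_clinear_scaleC]
        summable_neumann])

lemma neumann_add: "neumann w (x + y) = neumann w x + neumann w y"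
  unfolding neumann_def
  by (simp add: linear_add[OF bounded_linear.linear[OF bounded_linear_funpow]] scaleC_add_right
      suminf_add[OF summable_neumann summable_neumann])

lemma neumann_eq: "neumann w x = x + w *\<^sub>C A (neumann w x)"
proof -
  have "w *\<^sub>C A (neumann w x) = (\<Sum>n. w *\<^sub>C A ((w ^ n) *\<^sub>C (A ^^ n) x))"
    unfolding neumann_def A.suminf[OF summable_neumann]
    by (rule bounded_linear.suminf[OF bounded_clinear_imp_bounded_linear[OF bounded_clinear_scaleC]
          A.summable[OF summable_neumann]])
  also have "\<dots> = (\<Sum>n. (w ^ Suc n) *\<^sub>C (A ^^ Suc n) x)"
    by (simp add: A_scaleC scaleC_scaleC)
  also have "\<dots> = neumann w x - x"
    unfolding neumann_def using suminf_split_head[OF summable_neumann] by (simp add: scaleC_one)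
  finally show ?thesis by simp
qed

lemma neumann_inverse: "bounded_clinear_inverse (neumann w) (\<lambda>x. x - w *\<^sub>C A x)"
  unfolding bounded_clinear_inverse_def bounded_clinear_def clinear_def
proof (intro conjI allI)
  show "\<exists>K. \<forall>x. norm (neumann w x) \<le> norm x * K"
    using norm_neumann_le by (intro exI[of _ "1 / (1 - cmod w * onorm A)"]) simp
  show "neumann w (x - w *\<^sub>C A x) = x" for x
    using neumann_eq[of x] neumann_add[of "x - w *\<^sub>C A x" "w *\<^sub>C A x"]
    by (simp add: neumann_scaleC neumann_A) (metis add_right_cancel)
  show "neumann w y - w *\<^sub>C A (neumann w y) = y" for y
    using neumann_eq[of y] by (metis add_diff_cancel_right')
qed (simp_all add: neumann_add neumann_scaleC)

end

lemma op_spectrum_norm_le: "l \<in> op_spectrum A \<Longrightarrow> cmod l \<le> onorm A"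
proof (rule ccontr)
  assume l: "l \<in> op_spectrum A" and "\<not> cmod l \<le> onorm A"
  then have "0 < cmod l" and "onorm A < cmod l"
    using onorm_A_nonneg by auto
  then have "l \<noteq> 0" and "cmod (inverse l) * onorm A < 1"
    by (auto simp: norm_inverse norm_divide field_simps)
  then show False
    using l neumann_inverse not_in_op_spectrum_iff by blast
qed

lemma norm_le_spectral_radius: "l \<in> op_spectrum A \<Longrightarrow> cmod l \<le> spectral_radius A"
  unfolding spectral_radius_def
  by (rule cSup_upper) (auto intro!: bdd_aboveI[of _ "onorm A"] op_spectrum_norm_le)

lemma inverse_one_minus_exists:
  assumes "cmod w * spectral_radius A < 1"
  shows "\<exists>S. bounded_clinear_inverse S (\<lambda>x. x - w *\<^sub>C A x)"
proof (cases "w = 0")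
  case True
  then show ?thesis
    using bounded_clinear_ident by (auto simp: bounded_clinear_inverse_def)
next
  case False
  then have "spectral_radius A < cmod (inverse w)"
    using assms by (simp add: norm_inverse norm_divide field_simps)
  then have "inverse w \<notin> op_spectrum A"
    using norm_le_spectral_radius by force
  then show ?thesis
    using not_in_op_spectrum_iff[of "inverse w" A] False by simp
qed

section \<open>The operator \<open>(1 - wA)\<^sup>-\<^sup>1\<close> on the disc \<open>|w| r(A) < 1\<close>\<close>

definition resolvent_disc :: "complex set" where
  "resolvent_disc = {w. cmod w * spectral_radius A < 1}"

lemma open_resolvent_disc: "open resolvent_disc"
  unfolding resolvent_disc_def by (intro open_Collect_less continuous_intros)

lemma zero_in_resolvent_disc: "0 \<in> resolvent_disc"
  by (simp add: resolvent_disc_def)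

lemma cball_subset_resolvent_disc:
  assumes t: "0 < t" "spectral_radius A < t"
  shows "cball 0 (1 / t) \<subseteq> resolvent_disc"
proof
  fix w :: complex assume "w \<in> cball 0 (1 / t)"
  then have "cmod w * t \<le> 1"
    using t by (simp add: field_simps)
  show "w \<in> resolvent_disc"
  proof (cases "w = 0")
    case False
    then have "cmod w * spectral_radius A < cmod w * t"
      using t by simp
    with \<open>cmod w * t \<le> 1\<close> show ?thesis
      unfolding resolvent_disc_def mem_Collect_eq by linarith
  qed (simp add: resolvent_disc_def)
qed

definition inv_one_minus :: "complex \<Rightarrow> 'a \<Rightarrow> 'a" where
  "inv_one_minus w = (SOME S. bounded_clinear_inverse S (\<lambda>x. x - w *\<^sub>C A x))"

context
  fixes w :: complex
  assumes w: "w \<in> resolvent_disc"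
begin

lemma inv_one_minus: "bounded_clinear_inverse (inv_one_minus w) (\<lambda>x. x - w *\<^sub>C A x)"
proof -
  have "\<exists>S. bounded_clinear_inverse S (\<lambda>x. x - w *\<^sub>C A x)"
    using w by (intro inverse_one_minus_exists) (simp add: resolvent_disc_def)
  then show ?thesis
    unfolding inv_one_minus_def by (rule someI_ex)
qed

lemma inv_one_minus_left: "inv_one_minus w (x - w *\<^sub>C A x) = x"
  and inv_one_minus_right: "inv_one_minus w y - w *\<^sub>C A (inv_one_minus w y) = y"
  using inv_one_minus by (simp_all add: bounded_clinear_inverse_def)

lemma bounded_clinear_inv_one_minus: "bounded_clinear (inv_one_minus w)"
  using inv_one_minus by (simp add: bounded_clinear_inverse_def)

lemma norm_inv_one_minus_le: "norm (inv_one_minus w y) \<le> onorm (inv_one_minus w) * norm y"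
  and onorm_inv_one_minus_nonneg: "0 \<le> onorm (inv_one_minus w)"
  using onorm onorm_pos_le bounded_clinear_imp_bounded_linear[OF bounded_clinear_inv_one_minus]
  by auto

lemma inv_one_minus_eq_neumann:
  assumes "cmod w * onorm A < 1"
  shows "inv_one_minus w x = neumann w x"
  using inv_one_minus_left[of "neumann w x"] neumann_inverse[OF assms]
  by (simp add: bounded_clinear_inverse_def)

end

lemma inv_one_minus_diff:
  assumes w: "w \<in> resolvent_disc" and w0: "w0 \<in> resolvent_disc"
  shows "inv_one_minus w y - inv_one_minus w0 y =
    (w - w0) *\<^sub>C inv_one_minus w0 (A (inv_one_minus w y))"
proof -
  interpret S0: bounded_linear "inv_one_minus w0"
    by (rule bounded_clinear_imp_bounded_linear[OF bounded_clinear_inv_one_minus[OF w0]])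
  define z where "z = inv_one_minus w y"
  have "y = (z - w0 *\<^sub>C A z) - (w - w0) *\<^sub>C A z"
    using inv_one_minus_right[OF w, of y] by (simp add: z_def scaleC_diff_left)
  then have "inv_one_minus w0 y = inv_one_minus w0 (z - w0 *\<^sub>C A z) - inv_one_minus w0 ((w - w0) *\<^sub>C A z)"
    by (simp only: S0.diff)
  also have "\<dots> = z - (w - w0) *\<^sub>C inv_one_minus w0 (A z)"
    by (simp add: inv_one_minus_left[OF w0]
        bounded_clinear_scaleC_apply[OF bounded_clinear_inv_one_minus[OF w0]])
  finally show ?thesis by (simp add: z_def)
qed

text \<open>By the resolvent identity, \<open>\<parallel>(1 - wA)\<^sup>-\<^sup>1\<parallel> \<le> 2 K\<^sub>0\<close> as soon as
  \<open>|w - w\<^sub>0| K\<^sub>0 \<parallel>A\<parallel> \<le> 1/2\<close>, where \<open>K\<^sub>0 = \<parallel>(1 - w\<^sub>0A)\<^sup>-\<^sup>1\<parallel>\<close>.\<close>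

lemma inv_one_minus_locally_bounded:
  assumes w0: "w0 \<in> resolvent_disc"
  shows "\<exists>e>0. ball w0 e \<subseteq> resolvent_disc \<and>
    (\<exists>C. \<forall>w\<in>ball w0 e. \<forall>y. norm (inv_one_minus w y) \<le> C * norm y)"
proof -
  define K0 where "K0 = onorm (inv_one_minus w0)"
  note S0 = norm_inv_one_minus_le[OF w0, folded K0_def]
    and K0 = onorm_inv_one_minus_nonneg[OF w0, folded K0_def]
  obtain e1 where e1: "0 < e1" "ball w0 e1 \<subseteq> resolvent_disc"
    using open_resolvent_disc w0 open_contains_ball by blast
  define k where "k = K0 * onorm A"
  have k: "0 \<le> k"
    using K0 onorm_A_nonneg by (simp add: k_def)
  define e where "e = min e1 (1 / (2 * (k + 1)))"
  have e: "0 < e" "ball w0 e \<subseteq> resolvent_disc"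
    using e1 k by (auto simp: e_def)
  have "norm (inv_one_minus w y) \<le> 2 * K0 * norm y" if w: "w \<in> ball w0 e" for w y
  proof -
    define z where "z = inv_one_minus w y"
    have "cmod (w - w0) * (k + 1) < 1 / 2"
      using w k by (simp add: e_def dist_norm norm_minus_commute field_simps)
    moreover have "cmod (w - w0) * k \<le> cmod (w - w0) * (k + 1)"
      by (simp add: mult_left_mono)
    ultimately have small: "cmod (w - w0) * k \<le> 1 / 2"
      by linarith
    have "z = inv_one_minus w0 y + (w - w0) *\<^sub>C inv_one_minus w0 (A z)"
      using inv_one_minus_diff[OF subsetD[OF e(2) w] w0, of y] by (simp add: z_def diff_eq_eq add.commute)
    then have "norm z \<le> norm (inv_one_minus w0 y) + cmod (w - w0) * norm (inv_one_minus w0 (A z))"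
      by (metis norm_scaleC norm_triangle_ineq)
    also have "\<dots> \<le> K0 * norm y + cmod (w - w0) * k * norm z"
      using S0[of "A z"] mult_left_mono[OF norm_A_le K0, of z]
      by (intro add_mono S0) (auto simp: k_def mult.assoc intro: mult_left_mono)
    also have "\<dots> \<le> K0 * norm y + 1 / 2 * norm z"
      using small by (intro add_left_mono mult_right_mono) auto
    finally show ?thesis by (simp add: z_def)
  qed
  then show ?thesis using e by blast
qed

lemma inv_one_minus_tendsto:
  assumes w0: "w0 \<in> resolvent_disc"
  shows "((\<lambda>w. inv_one_minus w x) \<longlongrightarrow> inv_one_minus w0 x) (at w0)"
proof -
  obtain e C where e: "0 < e" "ball w0 e \<subseteq> resolvent_disc"
    and C: "\<And>w y. w \<in> ball w0 e \<Longrightarrow> norm (inv_one_minus w y) \<le> C * norm y"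
    using inv_one_minus_locally_bounded[OF w0] by blast
  define K0 where "K0 = onorm (inv_one_minus w0)"
  note S0 = norm_inv_one_minus_le[OF w0, folded K0_def]
    and K0 = onorm_inv_one_minus_nonneg[OF w0, folded K0_def]
  define c where "c = K0 * (onorm A * (C * norm x))"
  have bound: "norm (inv_one_minus w x - inv_one_minus w0 x) \<le> cmod (w - w0) * c"
    if w: "w \<in> ball w0 e" for w
  proof -
    have "norm (inv_one_minus w0 (A (inv_one_minus w x))) \<le> K0 * norm (A (inv_one_minus w x))"
      by (rule S0)
    also have "\<dots> \<le> K0 * (onorm A * norm (inv_one_minus w x))"
      by (intro mult_left_mono norm_A_le K0)
    also have "\<dots> \<le> c"
      unfolding c_def by (intro mult_left_mono C[OF w] K0 onorm_A_nonneg)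
    finally show ?thesis
      using inv_one_minus_diff[OF subsetD[OF e(2) w] w0, of x]
      by (simp add: norm_scaleC mult_left_mono)
  qed
  have "\<forall>\<^sub>F w in at w0. w \<in> ball w0 e"
    using e(1) by (intro eventually_at_in_open') auto
  then have "\<forall>\<^sub>F w in at w0. norm (inv_one_minus w x - inv_one_minus w0 x) \<le> cmod (w - w0) * c"
    by (rule eventually_mono) (rule bound)
  moreover have "((\<lambda>w. cmod (w - w0) * c) \<longlongrightarrow> 0) (at w0)"
    by (intro tendsto_mult_left_zero tendsto_norm_zero LIM_zero tendsto_ident_at)
  ultimately have "((\<lambda>w. inv_one_minus w x - inv_one_minus w0 x) \<longlongrightarrow> 0) (at w0)"
    by (rule Lim_null_comparison)
  then show ?thesis
    by (rule LIM_zero_cancel)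
qed

end

section \<open>Geometric growth of the powers of \<open>A\<close>\<close>

lemma uniformly_bounded_on_compact:
  fixes S :: "'p::metric_space \<Rightarrow> 'a::real_normed_vector \<Rightarrow> 'b::real_normed_vector"
  assumes "compact C" and loc: "\<And>w0. w0 \<in> C \<Longrightarrow> \<exists>e>0. \<exists>M. \<forall>w\<in>ball w0 e. \<forall>y. norm (S w y) \<le> M * norm y"
  shows "\<exists>M\<ge>0. \<forall>w\<in>C. \<forall>y. norm (S w y) \<le> M * norm y"
proof -
  have "\<forall>w0\<in>C. \<exists>e>0. \<exists>M. \<forall>w\<in>ball w0 e. \<forall>y. norm (S w y) \<le> M * norm y"
    using loc by blast
  then obtain e where e: "\<And>w0. w0 \<in> C \<Longrightarrow> 0 < e w0"
    and "\<forall>w0\<in>C. \<exists>M. \<forall>w\<in>ball w0 (e w0). \<forall>y. norm (S w y) \<le> M * norm y"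
    by (metis (no_types, lifting) bchoice)
  then obtain M where M: "\<And>w0 w y. w0 \<in> C \<Longrightarrow> w \<in> ball w0 (e w0) \<Longrightarrow>
      norm (S w y) \<le> M w0 * norm y"
    by (metis (no_types, lifting) bchoice)
  have "C \<subseteq> (\<Union>w0\<in>C. ball w0 (e w0))"
    using e by force
  then obtain T where T: "T \<subseteq> C" "finite T" "C \<subseteq> (\<Union>w0\<in>T. ball w0 (e w0))"
    by (rule compactE_image[OF assms(1) open_ball])
  have "norm (S w y) \<le> (\<Sum>w0\<in>T. \<bar>M w0\<bar>) * norm y" if "w \<in> C" for w y
  proof -
    obtain w0 where w0: "w0 \<in> T" "w \<in> ball w0 (e w0)"
      using T(3) \<open>w \<in> C\<close> by blast
    have "norm (S w y) \<le> M w0 * norm y"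
      using M w0 T(1) by blast
    also have "\<dots> \<le> (\<Sum>w0\<in>T. \<bar>M w0\<bar>) * norm y"
      using member_le_sum[of w0 T "\<lambda>w0. \<bar>M w0\<bar>"] w0(1) T(2)
      by (intro mult_right_mono) auto
    finally show ?thesis .
  qed
  moreover have "0 \<le> (\<Sum>w0\<in>T. \<bar>M w0\<bar>)"
    by (simp add: sum_nonneg)
  ultimately show ?thesis by blast
qed

locale hilbert_bounded_clinear_op = bounded_clinear_op A for A :: "'a::chilbert_space \<Rightarrow> 'a"
begin

lemma cinner_inv_one_minus_has_field_derivative:
  assumes w0: "w0 \<in> resolvent_disc"
  shows "((\<lambda>w. cinner y (inv_one_minus w x)) has_field_derivative
    cinner y (inv_one_minus w0 (A (inv_one_minus w0 x)))) (at w0)"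
  unfolding has_field_derivative_iff
proof (rule Lim_transform_eventually)
  have "bounded_linear (\<lambda>z. cinner y (inv_one_minus w0 (A z)))"
    using bounded_clinear_imp_bounded_linear[OF bounded_clinear_inv_one_minus[OF w0]]
    by (intro bounded_linear_compose[OF bounded_linear_cinner_right]
        bounded_linear_compose[OF _ A.bounded_linear_axioms])
  then show "((\<lambda>w. cinner y (inv_one_minus w0 (A (inv_one_minus w x)))) \<longlongrightarrow>
      cinner y (inv_one_minus w0 (A (inv_one_minus w0 x)))) (at w0)"
    by (rule bounded_linear.tendsto[OF _ inv_one_minus_tendsto[OF w0]])
  have "\<forall>\<^sub>F w in at w0. w \<in> resolvent_disc \<and> w \<noteq> w0"
    using w0 open_resolvent_disc
    by (intro eventually_conj eventually_at_in_open' eventually_neq_at_within)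
  then show "\<forall>\<^sub>F w in at w0. cinner y (inv_one_minus w0 (A (inv_one_minus w x))) =
      (cinner y (inv_one_minus w x) - cinner y (inv_one_minus w0 x)) / (w - w0)"
    by (rule eventually_mono)
      (simp add: inv_one_minus_diff[OF _ w0] cinner_diff_right[symmetric] cinner_scaleC_right)
qed

lemma cinner_inv_one_minus_holomorphic:
  "(\<lambda>w. cinner y (inv_one_minus w x)) holomorphic_on resolvent_disc"
  using holomorphic_on_open[OF open_resolvent_disc] cinner_inv_one_minus_has_field_derivative
  by blast

lemma fps_conv_radius_cinner_funpow_pos: "0 < fps_conv_radius (Abs_fps (\<lambda>n. cinner y ((A ^^ n) x)))"
proof -
  define e where "e = 1 / (onorm A + 1)"
  have e: "0 < e" "e * onorm A < 1"
    using onorm_A_nonneg by (auto simp: e_def field_simps)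
  have "summable (\<lambda>n. cinner y ((A ^^ n) x) * complex_of_real e ^ n)"
  proof (rule summable_comparison_test')
    show "summable (\<lambda>n. norm y * norm x * (e * onorm A) ^ n)"
      using e onorm_A_nonneg by (intro summable_mult summable_geometric) auto
    show "norm (cinner y ((A ^^ n) x) * complex_of_real e ^ n) \<le> norm y * norm x * (e * onorm A) ^ n"
      for n
    proof -
      have "cmod (cinner y ((A ^^ n) x)) \<le> norm y * (onorm A ^ n * norm x)"
        by (rule order.trans[OF norm_cinner_le mult_left_mono[OF norm_funpow_le]]) simp
      then show ?thesis
        using e by (simp add: norm_mult norm_power power_mult_distrib mult_right_mono mult_ac)
    qed
  qed
  then have "ereal e \<le> fps_conv_radius (Abs_fps (\<lambda>n. cinner y ((A ^^ n) x)))"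
    using conv_radius_geI e(1) by (fastforce simp: fps_conv_radius_def)
  with e(1) show ?thesis
    by (metis ereal_less(2) order.strict_trans2)
qed

lemma cinner_inv_one_minus_has_fps_expansion:
  "(\<lambda>w. cinner y (inv_one_minus w x)) has_fps_expansion Abs_fps (\<lambda>n. cinner y ((A ^^ n) x))"
  unfolding has_fps_expansion_def
proof (intro conjI fps_conv_radius_cinner_funpow_pos)
  define e where "e = 1 / (onorm A + 1)"
  have e: "0 < e" "e * onorm A < 1"
    using onorm_A_nonneg by (auto simp: e_def field_simps)
  have "\<forall>\<^sub>F z in nhds 0. z \<in> resolvent_disc \<and> z \<in> ball 0 e"
    using zero_in_resolvent_disc e(1)
    by (intro eventually_conj eventually_nhds_in_open open_resolvent_disc open_ball) auto
  then show "\<forall>\<^sub>F z in nhds 0. eval_fps (Abs_fps (\<lambda>n. cinner y ((A ^^ n) x))) z =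
      cinner y (inv_one_minus z x)"
  proof (rule eventually_mono)
    fix z assume z: "z \<in> resolvent_disc \<and> z \<in> ball 0 e"
    then have "cmod z * onorm A \<le> e * onorm A"
      using onorm_A_nonneg by (intro mult_right_mono) auto
    then have small: "cmod z * onorm A < 1"
      using e(2) by linarith
    have "cinner y (inv_one_minus z x) = cinner y (\<Sum>n. (z ^ n) *\<^sub>C (A ^^ n) x)"
      using z inv_one_minus_eq_neumann[OF _ small] by (simp add: neumann_def)
    also have "\<dots> = (\<Sum>n. cinner y ((z ^ n) *\<^sub>C (A ^^ n) x))"
      by (rule bounded_linear.suminf[OF bounded_linear_cinner_right summable_neumann[OF small]])
    finally show "eval_fps (Abs_fps (\<lambda>n. cinner y ((A ^^ n) x))) z = cinner y (inv_one_minus z x)"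
      by (simp add: eval_fps_def cinner_scaleC_right mult.commute)
  qed
qed

text \<open>Cauchy's estimate on the circle \<open>|w| = 1/t\<close> for the Taylor coefficients \<open>\<langle>y, A\<^sup>n x\<rangle>\<close> of
  \<open>w \<mapsto> \<langle>y, (1 - wA)\<^sup>-\<^sup>1 x\<rangle>\<close>.  With a bound \<open>M\<close> uniform on the circle this yields
  \<open>\<parallel>A\<^sup>n\<parallel> \<le> M t\<^sup>n\<close> for every \<open>t > r(A)\<close>, the nontrivial half of Gelfand's formula.\<close>

lemma norm_cinner_funpow_le:
  assumes t: "0 < t" "spectral_radius A < t"
    and M: "\<And>w z. w \<in> sphere 0 (1 / t) \<Longrightarrow> norm (inv_one_minus w z) \<le> M * norm z"
  shows "cmod (cinner y ((A ^^ n) x)) \<le> M * t ^ n * norm x * norm y"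
proof -
  define r where "r = 1 / t"
  define phi where "phi w = cinner y (inv_one_minus w x)" for w
  have holo: "phi holomorphic_on cball 0 r"
    unfolding phi_def r_def
    by (rule holomorphic_on_subset[OF cinner_inv_one_minus_holomorphic cball_subset_resolvent_disc[OF t]])
  have Cauchy: "norm ((deriv ^^ n) phi 0) \<le> fact n * (norm y * (M * norm x)) / r ^ n"
  proof (rule Cauchy_inequality)
    show "phi holomorphic_on ball 0 r"
      using holo by (rule holomorphic_on_subset) auto
    show "continuous_on (cball 0 r) phi"
      using holo by (rule holomorphic_on_imp_continuous_on)
    show "norm (phi w) \<le> norm y * (M * norm x)" if "norm (0 - w) = r" for w
      using order.trans[OF norm_cinner_le mult_left_mono[OF M]] that by (simp add: phi_def r_def)
  qed (use t in \<open>simp add: r_def\<close>)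
  have "cinner y ((A ^^ n) x) = (deriv ^^ n) phi 0 / fact n"
    using fps_nth_fps_expansion[OF cinner_inv_one_minus_has_fps_expansion, of y x n]
    by (simp add: phi_def[abs_def])
  then have "cmod (cinner y ((A ^^ n) x)) = norm ((deriv ^^ n) phi 0) / fact n"
    by (simp add: norm_divide)
  also have "\<dots> \<le> norm y * (M * norm x) / r ^ n"
    using divide_right_mono[OF Cauchy, of "fact n"] by simp
  also have "\<dots> = M * t ^ n * norm x * norm y"
    by (simp add: r_def power_one_over)
  finally show ?thesis .
qed

lemma norm_funpow_le_geometric:
  assumes t: "0 < t" "spectral_radius A < t"
  shows "\<exists>M\<ge>0. \<forall>n x. norm ((A ^^ n) x) \<le> M * t ^ n * norm x"
proof -
  have "\<exists>M\<ge>0. \<forall>w\<in>sphere 0 (1 / t). \<forall>z. norm (inv_one_minus w z) \<le> M * norm z"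
  proof (rule uniformly_bounded_on_compact)
    fix w0 :: complex assume "w0 \<in> sphere 0 (1 / t)"
    then have "w0 \<in> resolvent_disc"
      using cball_subset_resolvent_disc[OF t] by auto
    then show "\<exists>e>0. \<exists>M. \<forall>w\<in>ball w0 e. \<forall>y. norm (inv_one_minus w y) \<le> M * norm y"
      using inv_one_minus_locally_bounded by blast
  qed simp
  then obtain M where M: "0 \<le> M" "\<And>w z. w \<in> sphere 0 (1 / t) \<Longrightarrow> norm (inv_one_minus w z) \<le> M * norm z"
    by blast
  have "norm ((A ^^ n) x) \<le> M * t ^ n * norm x" for n x
  proof (cases "(A ^^ n) x = 0")
    case False
    have "norm ((A ^^ n) x) * norm ((A ^^ n) x) \<le> (M * t ^ n * norm x) * norm ((A ^^ n) x)"
      using norm_cinner_funpow_le[OF t M(2), of "(A ^^ n) x" n x]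
      by (simp add: norm_cinner_self power2_eq_square)
    then show ?thesis
      using False by simp
  qed (use M t in simp)
  then show ?thesis
    using M(1) by blast
qed

end

section \<open>Weighted square-summable sequences\<close>

definition weighted_norm :: "real \<Rightarrow> (int \<Rightarrow> 'a::real_normed_vector) \<Rightarrow> int \<Rightarrow> real" where
  "weighted_norm \<rho> v k = norm (v k) * \<rho> powi (-k)"

lemma power2_weighted_norm: "(weighted_norm \<rho> v k)\<^sup>2 = (norm (v k))\<^sup>2 * \<rho> powi (-2 * k)"
proof -
  have "\<rho> powi (-2 * k) = (\<rho> powi (-k))\<^sup>2"
    using power_int_mult[of \<rho> "-k" 2] by (simp add: mult.commute)
  then show ?thesis
    by (simp add: weighted_norm_def power_mult_distrib)
qed

lemma l2rho_iff_weighted_norm: "v \<in> l2rho \<rho> \<longleftrightarrow> (\<lambda>k. (weighted_norm \<rho> v k)\<^sup>2) summable_on UNIV"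
  by (simp add: l2rho_def power2_weighted_norm)

lemma l2rho_norm_eq_weighted_norm: "l2rho_norm \<rho> v = sqrt (\<Sum>\<^sub>\<infinity>k. (weighted_norm \<rho> v k)\<^sup>2)"
  by (simp add: l2rho_norm_def power2_weighted_norm)

lemma l2rho_norm_nonneg: "0 \<le> l2rho_norm \<rho> v"
  by (simp add: l2rho_norm_eq_weighted_norm infsum_nonneg)

lemma weighted_norm_nonneg: "0 \<le> \<rho> \<Longrightarrow> 0 \<le> weighted_norm \<rho> v k"
  by (simp add: weighted_norm_def)

lemma le_infsum_of_nonneg:
  fixes f :: "'a \<Rightarrow> real"
  assumes "f summable_on UNIV" "\<And>k. 0 \<le> f k"
  shows "f k \<le> (\<Sum>\<^sub>\<infinity>k. f k)"
  using finite_sum_le_infsum[of f UNIV "{k}"] assms by simp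

lemma weighted_norm_le_l2rho_norm:
  assumes "0 \<le> \<rho>" "v \<in> l2rho \<rho>"
  shows "weighted_norm \<rho> v k \<le> l2rho_norm \<rho> v"
proof -
  have "(weighted_norm \<rho> v k)\<^sup>2 \<le> (\<Sum>\<^sub>\<infinity>k. (weighted_norm \<rho> v k)\<^sup>2)"
    using assms by (intro le_infsum_of_nonneg) (simp_all add: l2rho_iff_weighted_norm)
  then show ?thesis
    using weighted_norm_nonneg[OF assms(1)] unfolding l2rho_norm_eq_weighted_norm
    by (metis real_le_rsqrt)
qed

lemma norm_le_l2rho_norm:
  assumes "0 < \<rho>" "v \<in> l2rho \<rho>"
  shows "norm (v k) \<le> l2rho_norm \<rho> v * \<rho> powi k"
proof -
  have "norm (v k) = weighted_norm \<rho> v k * \<rho> powi k"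
    using assms(1) by (simp add: weighted_norm_def power_int_minus field_simps)
  also have "\<dots> \<le> l2rho_norm \<rho> v * \<rho> powi k"
    using weighted_norm_le_l2rho_norm[OF less_imp_le[OF assms(1)] assms(2)] assms(1)
    by (intro mult_right_mono) auto
  finally show ?thesis .
qed

lemma delta_m1_in_l2rho: "delta_m1 x \<in> l2rho \<rho>"
proof -
  have "(\<lambda>k. (norm (delta_m1 x k))\<^sup>2 * \<rho> powi (-2 * k)) summable_on {-1}"
    by simp
  then show ?thesis
    unfolding l2rho_def mem_Collect_eq
    by (rule summable_on_cong_neutral[THEN iffD1, rotated -1]) (auto simp: delta_m1_def)
qed

lemma power2_suminf_mult_le:
  fixes w x :: "nat \<Rightarrow> real"
  assumes "\<And>j. 0 \<le> w j" "summable w" "summable (\<lambda>j. w j * (x j)\<^sup>2)" "summable (\<lambda>j. w j * x j)"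
  shows "(\<Sum>j. w j * x j)\<^sup>2 \<le> (\<Sum>j. w j) * (\<Sum>j. w j * (x j)\<^sup>2)"
proof (rule LIMSEQ_le)
  show "(\<lambda>N. (\<Sum>j<N. w j * x j)\<^sup>2) \<longlonglongrightarrow> (\<Sum>j. w j * x j)\<^sup>2"
    by (intro tendsto_power summable_LIMSEQ assms)
  show "(\<lambda>N. (\<Sum>j<N. w j) * (\<Sum>j<N. w j * (x j)\<^sup>2)) \<longlonglongrightarrow> (\<Sum>j. w j) * (\<Sum>j. w j * (x j)\<^sup>2)"
    by (intro tendsto_mult summable_LIMSEQ assms)
  have "(\<Sum>j<N. w j * x j)\<^sup>2 \<le> (\<Sum>j<N. w j) * (\<Sum>j<N. w j * (x j)\<^sup>2)" for N
  proof -
    have "(\<Sum>j<N. w j * x j)\<^sup>2 = (\<Sum>j<N. sqrt (w j) * (sqrt (w j) * x j))\<^sup>2"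
      using assms(1) by (simp add: mult.assoc[symmetric])
    also have "\<dots> \<le> (\<Sum>j<N. (sqrt (w j))\<^sup>2) * (\<Sum>j<N. (sqrt (w j) * x j)\<^sup>2)"
      by (rule Cauchy_Schwarz_ineq_sum)
    also have "\<dots> = (\<Sum>j<N. w j) * (\<Sum>j<N. w j * (x j)\<^sup>2)"
      using assms(1) by (simp add: power_mult_distrib)
    finally show ?thesis .
  qed
  then show "\<exists>N. \<forall>n\<ge>N. (\<Sum>j<n. w j * x j)\<^sup>2 \<le> (\<Sum>j<n. w j) * (\<Sum>j<n. w j * (x j)\<^sup>2)"
    by blast
qed

lemma summable_geometric_mult_bounded:
  fixes a :: "nat \<Rightarrow> real"
  assumes "\<bar>q\<bar> < 1" "\<And>j. \<bar>a j\<bar> \<le> B"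
  shows "summable (\<lambda>j. q ^ j * a j)"
proof (rule summable_comparison_test')
  show "summable (\<lambda>j. \<bar>q\<bar> ^ j * B)"
    using assms(1) by (intro summable_mult2 summable_geometric) simp
  show "norm (q ^ j * a j) \<le> \<bar>q\<bar> ^ j * B" for j
    using assms(2)[of j] by (simp add: abs_mult power_abs mult_left_mono)
qed

lemma sum_shift_le_infsum:
  fixes b :: "int \<Rightarrow> real"
  assumes "b summable_on UNIV" "\<And>k. 0 \<le> b k" "finite F"
  shows "(\<Sum>n\<in>F. b (n - m)) \<le> (\<Sum>\<^sub>\<infinity>k. b k)"
proof -
  have "(\<Sum>n\<in>F. b (n - m)) = (\<Sum>k\<in>(\<lambda>n. n - m) ` F. b k)"
    by (subst sum.reindex) (auto simp: inj_on_def)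
  also have "\<dots> \<le> (\<Sum>\<^sub>\<infinity>k. b k)"
    using assms by (intro finite_sum_le_infsum) auto
  finally show ?thesis .
qed

text \<open>Young's inequality for the convolution with the geometric kernel \<open>(q\<^sup>j)\<^sub>j\<^sub>\<ge>\<^sub>0\<close>, whose
  \<open>\<ell>\<^sub>1\<close> norm is \<open>1 / (1 - q)\<close>: first on \<open>\<ell>\<^sub>1\<close>, then on \<open>\<ell>\<^sub>2\<close> by the Cauchy--Schwarz
  inequality weighted with the kernel.\<close>

lemma sum_geometric_convolution_le:
  fixes b :: "int \<Rightarrow> real"
  assumes b: "\<And>k. 0 \<le> b k" "b summable_on UNIV" and q: "0 \<le> q" "q < 1" and F: "finite F"
  shows "(\<Sum>n\<in>F. \<Sum>j. q ^ j * b (n - 1 - int j)) \<le> (\<Sum>\<^sub>\<infinity>k. b k) / (1 - q)"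
proof -
  define I where "I = (\<Sum>\<^sub>\<infinity>k. b k)"
  have "b k \<le> I" for k
    unfolding I_def by (rule le_infsum_of_nonneg[OF b(2) b(1)])
  then have summable: "summable (\<lambda>j. q ^ j * b (n - 1 - int j))" for n
    using q b(1) by (intro summable_geometric_mult_bounded[where B=I]) auto
  have shifted: "(\<Sum>n\<in>F. b (n - 1 - int j)) \<le> I" for j
    using sum_shift_le_infsum[OF b(2) b(1) F, of "1 + int j"] by (simp add: I_def diff_diff_eq)
  have "(\<Sum>n\<in>F. \<Sum>j. q ^ j * b (n - 1 - int j)) = (\<Sum>j. \<Sum>n\<in>F. q ^ j * b (n - 1 - int j))"
    by (rule suminf_sum[symmetric]) (rule summable)
  also have "\<dots> \<le> (\<Sum>j. q ^ j * I)"
    using q shifted summable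
    by (intro suminf_le summable_sum summable_mult2 summable_geometric)
      (auto simp: sum_distrib_left[symmetric] mult_left_mono)
  also have "\<dots> = I / (1 - q)"
    using q by (simp add: suminf_mult2[symmetric] suminf_geometric)
  finally show ?thesis
    by (simp add: I_def)
qed

lemma geometric_convolution_l2:
  fixes a :: "int \<Rightarrow> real"
  assumes a: "\<And>k. 0 \<le> a k" "(\<lambda>k. (a k)\<^sup>2) summable_on UNIV" and q: "0 \<le> q" "q < 1"
  shows "(\<lambda>n. (\<Sum>j. q ^ j * a (n - 1 - int j))\<^sup>2) summable_on UNIV"
    and "(\<Sum>\<^sub>\<infinity>n. (\<Sum>j. q ^ j * a (n - 1 - int j))\<^sup>2) \<le> (\<Sum>\<^sub>\<infinity>k. (a k)\<^sup>2) / (1 - q)\<^sup>2"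
proof -
  define I where "I = (\<Sum>\<^sub>\<infinity>k. (a k)\<^sup>2)"
  define c where "c n = (\<Sum>j. q ^ j * a (n - 1 - int j))" for n
  have aI: "(a k)\<^sup>2 \<le> I" for k
    unfolding I_def by (rule le_infsum_of_nonneg[OF a(2)]) simp
  have geom: "summable (\<lambda>j. q ^ j)" "(\<Sum>j. q ^ j) = 1 / (1 - q)"
    using q by (simp_all add: suminf_geometric)
  have "summable (\<lambda>j. q ^ j * a (n - 1 - int j))" for n
    using q a(1) aI by (intro summable_geometric_mult_bounded[where B="sqrt I"])
      (auto simp: real_le_rsqrt)
  moreover have "summable (\<lambda>j. q ^ j * (a (n - 1 - int j))\<^sup>2)" for n
    using q aI by (intro summable_geometric_mult_bounded[where B=I]) auto
  ultimately have c_le: "(c n)\<^sup>2 \<le> 1 / (1 - q) * (\<Sum>j. q ^ j * (a (n - 1 - int j))\<^sup>2)" for n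
    unfolding c_def geom(2)[symmetric] using q by (intro power2_suminf_mult_le geom(1)) simp_all
  have c_sum_le: "(\<Sum>n\<in>F. (c n)\<^sup>2) \<le> I / (1 - q)\<^sup>2" if "finite F" for F
  proof -
    have "(\<Sum>n\<in>F. (c n)\<^sup>2) \<le> 1 / (1 - q) * (\<Sum>n\<in>F. \<Sum>j. q ^ j * (a (n - 1 - int j))\<^sup>2)"
      unfolding sum_distrib_left by (intro sum_mono c_le)
    also have "\<dots> \<le> 1 / (1 - q) * (I / (1 - q))"
      unfolding I_def using q a that by (intro mult_left_mono sum_geometric_convolution_le) auto
    finally show ?thesis
      by (simp add: power2_eq_square)
  qed
  show summable: "(\<lambda>n. (\<Sum>j. q ^ j * a (n - 1 - int j))\<^sup>2) summable_on UNIV"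
    using c_sum_le unfolding c_def[symmetric]
    by (intro nonneg_bdd_above_summable_on) (auto intro!: bdd_aboveI)
  show "(\<Sum>\<^sub>\<infinity>n. (\<Sum>j. q ^ j * a (n - 1 - int j))\<^sup>2) \<le> (\<Sum>\<^sub>\<infinity>k. (a k)\<^sup>2) / (1 - q)\<^sup>2"
    using summable c_sum_le unfolding c_def[symmetric] I_def by (intro infsum_le_finite_sums)
qed

section \<open>The inverse of \<open>\<tau> - A\<close> on \<open>\<ell>\<^sub>2\<^sub>,\<^sub>\<rho>(\<int>; H)\<close>\<close>

locale geometrically_bounded_op = bounded_clinear_op +
  fixes \<rho> s M :: real
  assumes rho: "0 < \<rho>" and s: "0 \<le> s" "s < \<rho>" and M: "0 \<le> M"
    and funpow_bound: "\<And>n x. norm ((A ^^ n) x) \<le> M * s ^ n * norm x"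
begin

text \<open>\<open>(\<tau> - A)\<^sup>-\<^sup>1 v = \<Sum>\<^sub>j\<^sub>\<ge>\<^sub>0 A\<^sup>j \<tau>\<^sup>-\<^sup>j\<^sup>-\<^sup>1 v\<close>, the Neumann series of
  \<open>(\<tau> - A)\<^sup>-\<^sup>1 = \<tau>\<^sup>-\<^sup>1 (1 - A \<tau>\<^sup>-\<^sup>1)\<^sup>-\<^sup>1\<close>.\<close>

definition inv_shift_minus :: "(int \<Rightarrow> 'a) \<Rightarrow> int \<Rightarrow> 'a" where
  "inv_shift_minus v n = (\<Sum>j. (A ^^ j) (v (n - 1 - int j)))"

lemma s_div_rho_bounds: "0 \<le> s / \<rho>" "s / \<rho> < 1"
  using rho s by simp_all

lemma norm_inv_shift_minus_term_le:
  assumes "v \<in> l2rho \<rho>"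
  shows "norm ((A ^^ j) (v (n - 1 - int j))) \<le> M * l2rho_norm \<rho> v * \<rho> powi (n - 1) * (s / \<rho>) ^ j"
proof -
  have "norm ((A ^^ j) (v (n - 1 - int j))) \<le> M * s ^ j * norm (v (n - 1 - int j))"
    by (rule funpow_bound)
  also have "\<dots> \<le> M * s ^ j * (l2rho_norm \<rho> v * \<rho> powi (n - 1 - int j))"
    using norm_le_l2rho_norm[OF rho assms] M s by (intro mult_left_mono) auto
  also have "\<rho> powi (n - 1 - int j) = \<rho> powi (n - 1) / \<rho> ^ j"
    using rho by (simp add: power_int_diff)
  finally show ?thesis
    using rho by (simp add: power_divide field_simps)
qed

lemma summable_norm_inv_shift_minus_terms:
  assumes "v \<in> l2rho \<rho>"
  shows "summable (\<lambda>j. norm ((A ^^ j) (v (n - 1 - int j))))"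
proof (rule summable_comparison_test')
  show "summable (\<lambda>j. M * l2rho_norm \<rho> v * \<rho> powi (n - 1) * (s / \<rho>) ^ j)"
    using s_div_rho_bounds by (intro summable_mult summable_geometric) auto
qed (use norm_inv_shift_minus_term_le[OF assms] in simp)

lemma summable_inv_shift_minus_terms:
  "v \<in> l2rho \<rho> \<Longrightarrow> summable (\<lambda>j. (A ^^ j) (v (n - 1 - int j)))"
  by (rule summable_norm_cancel[OF summable_norm_inv_shift_minus_terms])

lemma shift_minus_inv_shift_minus:
  assumes "v \<in> l2rho \<rho>"
  shows "shift (inv_shift_minus v) n - A (inv_shift_minus v n) = v n"
proof -
  define f where "f j = (A ^^ j) (v (n - int j))" for j
  have f: "summable f"
    using summable_inv_shift_minus_terms[OF assms, of "n + 1"] by (simp add: f_def[abs_def])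
  have "(\<Sum>j. f (Suc j)) = (\<Sum>j. A ((A ^^ j) (v (n - 1 - int j))))"
    by (simp add: f_def algebra_simps)
  also have "\<dots> = A (inv_shift_minus v n)"
    unfolding inv_shift_minus_def by (rule A.suminf[OF summable_inv_shift_minus_terms[OF assms], symmetric])
  finally show ?thesis
    using suminf_split_head[OF f] by (simp add: shift_def inv_shift_minus_def f_def[abs_def])
qed

text \<open>Telescoping: \<open>\<Sum>\<^sub>j\<^sub><\<^sub>N A\<^sup>j (v\<^sub>n\<^sub>-\<^sub>j - A v\<^sub>n\<^sub>-\<^sub>j\<^sub>-\<^sub>1) = v\<^sub>n - A\<^sup>N v\<^sub>n\<^sub>-\<^sub>N\<close>, and the last term
  tends to \<open>0\<close> because \<open>v \<in> \<ell>\<^sub>2\<^sub>,\<^sub>\<rho>\<close> and \<open>s < \<rho>\<close>.\<close>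

lemma inv_shift_minus_shift_minus:
  assumes "v \<in> l2rho \<rho>"
  shows "inv_shift_minus (\<lambda>n. shift v n - A (v n)) n = v n"
proof -
  define g where "g j = (A ^^ j) (v (n - int j))" for j
  have "g \<longlonglongrightarrow> 0"
  proof (rule Lim_null_comparison)
    show "\<forall>\<^sub>F j in sequentially. norm (g j) \<le> M * l2rho_norm \<rho> v * \<rho> powi n * (s / \<rho>) ^ j"
      using norm_inv_shift_minus_term_le[OF assms, of _ "n + 1"] by (simp add: g_def)
    show "(\<lambda>j. M * l2rho_norm \<rho> v * \<rho> powi n * (s / \<rho>) ^ j) \<longlonglongrightarrow> 0"
      using s_div_rho_bounds by (intro tendsto_mult_right_zero LIMSEQ_power_zero) auto
  qed
  then have "(\<lambda>j. g j - g (Suc j)) sums (g 0 - 0)"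
    by (rule telescope_sums')
  moreover have "g j - g (Suc j) = (A ^^ j) (shift v (n - 1 - int j) - A (v (n - 1 - int j)))" for j
    by (simp add: g_def shift_def linear_diff[OF bounded_linear.linear[OF bounded_linear_funpow]]
        funpow_swap1 algebra_simps)
  ultimately show ?thesis
    by (simp add: inv_shift_minus_def g_def sums_iff)
qed

lemma inv_shift_minus_add:
  "v \<in> l2rho \<rho> \<Longrightarrow> w \<in> l2rho \<rho> \<Longrightarrow>
    inv_shift_minus (\<lambda>n. v n + w n) = (\<lambda>n. inv_shift_minus v n + inv_shift_minus w n)"
  unfolding inv_shift_minus_def
  by (simp add: linear_add[OF bounded_linear.linear[OF bounded_linear_funpow]]
      suminf_add[OF summable_inv_shift_minus_terms summable_inv_shift_minus_terms])

lemma inv_shift_minus_scaleC: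
  "v \<in> l2rho \<rho> \<Longrightarrow> inv_shift_minus (\<lambda>n. c *\<^sub>C v n) = (\<lambda>n. c *\<^sub>C inv_shift_minus v n)"
  unfolding inv_shift_minus_def
  by (simp add: bounded_clinear_scaleC_apply[OF bounded_clinear_funpow]
      bounded_linear.suminf[OF bounded_clinear_imp_bounded_linear[OF bounded_clinear_scaleC]
        summable_inv_shift_minus_terms])

lemma weighted_norm_inv_shift_minus_le:
  assumes v: "v \<in> l2rho \<rho>"
  shows "weighted_norm \<rho> (inv_shift_minus v) n \<le>
    M / \<rho> * (\<Sum>j. (s / \<rho>) ^ j * weighted_norm \<rho> v (n - 1 - int j))"
proof -
  have bounded: "\<bar>weighted_norm \<rho> v k\<bar> \<le> l2rho_norm \<rho> v" for k
    using weighted_norm_le_l2rho_norm[of \<rho> v k] weighted_norm_nonneg[of \<rho> v k] rho v by simp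
  have summable: "summable (\<lambda>j. (s / \<rho>) ^ j * weighted_norm \<rho> v (n - 1 - int j))"
    using s_div_rho_bounds bounded by (intro summable_geometric_mult_bounded[where B="l2rho_norm \<rho> v"]) auto
  have term_le: "norm ((A ^^ j) (v (n - 1 - int j))) * \<rho> powi (-n) \<le>
      M / \<rho> * ((s / \<rho>) ^ j * weighted_norm \<rho> v (n - 1 - int j))" for j
  proof -
    have "\<rho> powi (- (n - 1 - int j)) = \<rho> powi (-n) * \<rho> powi int (Suc j)"
      using rho by (subst power_int_add[symmetric]) (auto simp: algebra_simps)
    then have "\<rho> powi (- (n - 1 - int j)) = \<rho> powi (-n) * \<rho> ^ Suc j"
      by (simp only: power_int_of_nat)
    then have "M * s ^ j * norm (v (n - 1 - int j)) * \<rho> powi (-n) =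
        M / \<rho> * ((s / \<rho>) ^ j * weighted_norm \<rho> v (n - 1 - int j))"
      using rho by (simp add: weighted_norm_def power_divide field_simps)
    then show ?thesis
      using mult_right_mono[OF funpow_bound[of j "v (n - 1 - int j)"], of "\<rho> powi (-n)"] rho
      by simp
  qed
  have "weighted_norm \<rho> (inv_shift_minus v) n \<le> (\<Sum>j. norm ((A ^^ j) (v (n - 1 - int j)))) * \<rho> powi (-n)"
    unfolding weighted_norm_def inv_shift_minus_def using rho
    by (intro mult_right_mono summable_norm summable_norm_inv_shift_minus_terms[OF v]) auto
  also have "\<dots> = (\<Sum>j. norm ((A ^^ j) (v (n - 1 - int j))) * \<rho> powi (-n))"
    by (rule suminf_mult2[OF summable_norm_inv_shift_minus_terms[OF v]])
  also have "\<dots> \<le> (\<Sum>j. M / \<rho> * ((s / \<rho>) ^ j * weighted_norm \<rho> v (n - 1 - int j)))"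
    by (intro suminf_le term_le summable_mult2 summable_norm_inv_shift_minus_terms[OF v] summable_mult summable)
  also have "\<dots> = M / \<rho> * (\<Sum>j. (s / \<rho>) ^ j * weighted_norm \<rho> v (n - 1 - int j))"
    by (rule suminf_mult[OF summable])
  finally show ?thesis .
qed

lemma inv_shift_minus_in_l2rho:
  assumes v: "v \<in> l2rho \<rho>"
  shows "inv_shift_minus v \<in> l2rho \<rho>"
    and "l2rho_norm \<rho> (inv_shift_minus v) \<le> M / (\<rho> - s) * l2rho_norm \<rho> v"
proof -
  define a where "a = weighted_norm \<rho> v"
  define c where "c n = (\<Sum>j. (s / \<rho>) ^ j * a (n - 1 - int j))" for n
  have a: "\<And>k. 0 \<le> a k" "(\<lambda>k. (a k)\<^sup>2) summable_on UNIV"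
    using v rho by (simp_all add: a_def weighted_norm_nonneg l2rho_iff_weighted_norm)
  have le: "(weighted_norm \<rho> (inv_shift_minus v) n)\<^sup>2 \<le> (M / \<rho>)\<^sup>2 * (c n)\<^sup>2" for n
    using weighted_norm_inv_shift_minus_le[OF v, of n] weighted_norm_nonneg[of \<rho>] rho
    by (metis a_def c_def less_imp_le power_mono power_mult_distrib)
  have c: "(\<lambda>n. (c n)\<^sup>2) summable_on UNIV" "(\<Sum>\<^sub>\<infinity>n. (c n)\<^sup>2) \<le> (\<Sum>\<^sub>\<infinity>k. (a k)\<^sup>2) / (1 - s / \<rho>)\<^sup>2"
    using geometric_convolution_l2[OF a s_div_rho_bounds] by (simp_all add: c_def)
  have summable: "(\<lambda>n. (weighted_norm \<rho> (inv_shift_minus v) n)\<^sup>2) summable_on UNIV"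
    using le by (intro summable_on_comparison_test[OF summable_on_cmult_right[OF c(1)]]) auto
  then show "inv_shift_minus v \<in> l2rho \<rho>"
    by (simp add: l2rho_iff_weighted_norm)
  have "(\<Sum>\<^sub>\<infinity>n. (weighted_norm \<rho> (inv_shift_minus v) n)\<^sup>2) \<le> (\<Sum>\<^sub>\<infinity>n. (M / \<rho>)\<^sup>2 * (c n)\<^sup>2)"
    using le by (intro infsum_mono summable summable_on_cmult_right c(1))
  also have "\<dots> = (M / \<rho>)\<^sup>2 * (\<Sum>\<^sub>\<infinity>n. (c n)\<^sup>2)"
    by (rule infsum_cmult_right[OF c(1)])
  also have "\<dots> \<le> (M / \<rho>)\<^sup>2 * ((\<Sum>\<^sub>\<infinity>k. (a k)\<^sup>2) / (1 - s / \<rho>)\<^sup>2)"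
    by (intro mult_left_mono c(2)) simp
  also have "\<dots> = (M / (\<rho> - s) * l2rho_norm \<rho> v)\<^sup>2"
    using rho s a(1) infsum_nonneg[of UNIV "\<lambda>k. (a k)\<^sup>2"]
    by (simp add: a_def l2rho_norm_eq_weighted_norm power_mult_distrib power_divide field_simps)
  finally have "(\<Sum>\<^sub>\<infinity>n. (weighted_norm \<rho> (inv_shift_minus v) n)\<^sup>2) \<le>
      (M / (\<rho> - s) * l2rho_norm \<rho> v)\<^sup>2" .
  then show "l2rho_norm \<rho> (inv_shift_minus v) \<le> M / (\<rho> - s) * l2rho_norm \<rho> v"
    unfolding l2rho_norm_eq_weighted_norm[of \<rho> "inv_shift_minus v"]
    using s M by (intro real_le_lsqrt) (simp_all add: l2rho_norm_nonneg)
qed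

lemma is_l2rho_inverse_inv_shift_minus:
  "is_l2rho_inverse \<rho> inv_shift_minus (\<lambda>v n. shift v n - A (v n))"
  unfolding is_l2rho_inverse_def
  using inv_shift_minus_in_l2rho inv_shift_minus_add inv_shift_minus_scaleC
    shift_minus_inv_shift_minus inv_shift_minus_shift_minus
  by (intro conjI ballI allI ext exI[of _ "M / (\<rho> - s)"]) auto

lemma inv_shift_minus_delta_m1:
  "inv_shift_minus (delta_m1 x) = (\<lambda>n. if n < 0 then 0 else (A ^^ nat n) x)"
proof
  fix n :: int
  have "(\<lambda>j. (A ^^ j) (delta_m1 x (n - 1 - int j))) = (\<lambda>j. if n \<ge> 0 \<and> j = nat n then (A ^^ j) x else 0)"
    by (auto simp: delta_m1_def linear_0[OF bounded_linear.linear[OF bounded_linear_funpow]])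
  then show "inv_shift_minus (delta_m1 x) n = (if n < 0 then 0 else (A ^^ nat n) x)"
    using sums_single[of "nat n" "\<lambda>j. (A ^^ j) x"] by (auto simp: inv_shift_minus_def sums_iff)
qed

lemma solution_in_l2rho_iff:
  "(shift u = (\<lambda>n. A (u n) + delta_m1 x n) \<and> u \<in> l2rho \<rho>) \<longleftrightarrow>
    u = inv_shift_minus (delta_m1 x)"
proof
  assume "shift u = (\<lambda>n. A (u n) + delta_m1 x n) \<and> u \<in> l2rho \<rho>"
  then have "(\<lambda>n. shift u n - A (u n)) = delta_m1 x" and u: "u \<in> l2rho \<rho>"
    by auto
  then show "u = inv_shift_minus (delta_m1 x)"
    using inv_shift_minus_shift_minus[OF u] by auto
next
  assume u: "u = inv_shift_minus (delta_m1 x)"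
  have "shift u n = A (u n) + delta_m1 x n" for n
    using shift_minus_inv_shift_minus[OF delta_m1_in_l2rho, of x n] by (simp add: u diff_eq_eq add.commute)
  then show "shift u = (\<lambda>n. A (u n) + delta_m1 x n) \<and> u \<in> l2rho \<rho>"
    using inv_shift_minus_in_l2rho(1)[OF delta_m1_in_l2rho] by (auto simp: u)
qed

text \<open>Any inverse of \<open>\<tau> - A\<close> on \<open>\<ell>\<^sub>2\<^sub>,\<^sub>\<rho>\<close> agrees with \<open>inv_shift_minus\<close>, because \<open>\<tau> - A\<close> is
  injective there.\<close>

lemma l2rho_inverse_delta_m1_iff:
  "(\<exists>R. is_l2rho_inverse \<rho> R (\<lambda>v n. shift v n - A (v n)) \<and> u = R (delta_m1 x) \<and> u \<in> l2rho \<rho>)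
    \<longleftrightarrow> u = inv_shift_minus (delta_m1 x)"
proof
  assume "\<exists>R. is_l2rho_inverse \<rho> R (\<lambda>v n. shift v n - A (v n)) \<and> u = R (delta_m1 x) \<and> u \<in> l2rho \<rho>"
  then obtain R where R: "is_l2rho_inverse \<rho> R (\<lambda>v n. shift v n - A (v n))"
    and u: "u = R (delta_m1 x)" "u \<in> l2rho \<rho>"
    by blast
  then have "(\<lambda>n. shift u n - A (u n)) = delta_m1 x"
    using delta_m1_in_l2rho[of x \<rho>] unfolding is_l2rho_inverse_def by blast
  then show "u = inv_shift_minus (delta_m1 x)"
    using inv_shift_minus_shift_minus[OF u(2)] by auto
next
  assume "u = inv_shift_minus (delta_m1 x)"
  then show "\<exists>R. is_l2rho_inverse \<rho> R (\<lambda>v n. shift v n - A (v n)) \<and> u = R (delta_m1 x) \<and> u \<in> l2rho \<rho>"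
    using is_l2rho_inverse_inv_shift_minus inv_shift_minus_in_l2rho(1)[OF delta_m1_in_l2rho] by blast
qed

end

lemma (in hilbert_bounded_clinear_op) geometrically_bounded_op_exists:
  assumes "0 < \<rho>" "spectral_radius A < \<rho>"
  shows "\<exists>s M. geometrically_bounded_op A \<rho> s M"
proof -
  define s where "s = (max (spectral_radius A) 0 + \<rho>) / 2"
  have s: "0 < s" "spectral_radius A < s" "s < \<rho>"
    using assms by (auto simp: s_def)
  obtain M where "0 \<le> M" "\<And>n x. norm ((A ^^ n) x) \<le> M * s ^ n * norm x"
    using norm_funpow_le_geometric[OF s(1,2)] by blast
  then have "geometrically_bounded_op A \<rho> s M"
    using assms s by unfold_locales auto
  then show ?thesis by blast
qed

section \<open>The three elementary descriptions of the solution\<close>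

lemma shift_eq_step_delta_m1_iff:
  fixes A :: "'a::monoid_add \<Rightarrow> 'a"
  assumes "A 0 = 0"
  shows "(shift u = (\<lambda>n. A (u n) + delta_m1 x n) \<and> spt u \<subseteq> {0..}) \<longleftrightarrow>
    ((\<forall>n::int. n \<ge> 0 \<longrightarrow> u (n + 1) = A (u n)) \<and> u 0 = x \<and> (\<forall>n::int. n < 0 \<longrightarrow> u n = 0))"
    (is "?eq \<and> ?spt \<longleftrightarrow> ?rec \<and> ?init \<and> ?zero")
proof -
  have "?spt \<longleftrightarrow> ?zero"
    by (auto simp: spt_def subset_iff not_le[symmetric])
  moreover have "?eq \<longleftrightarrow> ?rec \<and> ?init" if zero: ?zero
  proof
    assume ?eq
    then have step: "u (n + 1) = A (u n) + delta_m1 x n" for n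
      by (simp add: fun_eq_iff shift_def)
    show "?rec \<and> ?init"
      using step[of "-1"] step zero assms by (simp add: delta_m1_def)
  next
    assume rec_init: "?rec \<and> ?init"
    have "u (n + 1) = A (u n) + delta_m1 x n" for n
    proof -
      consider "n \<ge> 0" | "n = -1" | "n < -1" by linarith
      then show ?thesis
        by cases (use rec_init zero assms in \<open>simp_all add: delta_m1_def\<close>)
    qed
    then show ?eq
      by (simp add: fun_eq_iff shift_def)
  qed
  ultimately show ?thesis by blast
qed

lemma recurrence_iff_funpow:
  "((\<forall>n::int. n \<ge> 0 \<longrightarrow> u (n + 1) = A (u n)) \<and> u 0 = x \<and> (\<forall>n::int. n < 0 \<longrightarrow> u n = 0)) \<longleftrightarrow>
    ((\<forall>n::int. n < 0 \<longrightarrow> u n = 0) \<and> (\<forall>n::int. n \<ge> 0 \<longrightarrow> u n = (A ^^ nat n) x))"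
    (is "?rec \<and> ?init \<and> ?zero \<longleftrightarrow> _ \<and> ?powers")
proof -
  have "?rec \<and> ?init \<longleftrightarrow> ?powers"
  proof
    assume rec_init: "?rec \<and> ?init"
    have "u (int k) = (A ^^ k) x" for k
    proof (induction k)
      case (Suc k)
      have "u (int k + 1) = A (u (int k))"
        using rec_init by simp
      then have "u (int (Suc k)) = A (u (int k))"
        by (simp add: add.commute)
      then show ?case
        using Suc by simp
    qed (use rec_init in simp)
    then show ?powers
      by (metis int_nat_eq)
  next
    assume powers: ?powers
    have "u (n + 1) = A (u n)" if "n \<ge> 0" for n
    proof -
      have "nat (n + 1) = Suc (nat n)"
        using that by simp
      then show ?thesis
        using powers that by simp
    qed
    then show "?rec \<and> ?init"
      using powers by simp
  qed
  then show ?thesis by blast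
qed

theorem proposition3p8:
  fixes A :: "'a::{chilbert_space, second_countable_topology} \<Rightarrow> 'a"
    and x :: 'a and u :: "int \<Rightarrow> 'a"
  assumes "bounded_clinear A"
  defines "i \<equiv> (shift u = (\<lambda>n. A (u n) + delta_m1 x n) \<and> spt u \<subseteq> {0..})"
    and "ii \<equiv> ((\<forall>n::int. n \<ge> 0 \<longrightarrow> u (n + 1) = A (u n)) \<and> u 0 = x \<and> (\<forall>n::int. n < 0 \<longrightarrow> u n = 0))"
    and "iii \<equiv> ((\<forall>n::int. n < 0 \<longrightarrow> u n = 0) \<and> (\<forall>n::int. n \<ge> 0 \<longrightarrow> u n = (A ^^ nat n) x))"
  shows "(i \<longleftrightarrow> ii) \<and> (ii \<longleftrightarrow> iii) \<and>
    (\<forall>\<rho>::real. \<rho> > 0 \<and> \<rho> > spectral_radius A \<longrightarrow>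
       (iii \<longleftrightarrow> (shift u = (\<lambda>n. A (u n) + delta_m1 x n) \<and> u \<in> l2rho \<rho>)) \<and>
       (iii \<longleftrightarrow> (\<exists>R. is_l2rho_inverse \<rho> R (\<lambda>v n. shift v n - A (v n)) \<and>
                      u = R (delta_m1 x) \<and> u \<in> l2rho \<rho>)))"
proof -
  interpret hilbert_bounded_clinear_op A
    by unfold_locales (rule assms(1))
  have "i \<longleftrightarrow> ii"
    unfolding i_def ii_def by (rule shift_eq_step_delta_m1_iff[where A = A and u = u and x = x, OF A.zero])
  moreover have "ii \<longleftrightarrow> iii"
    unfolding ii_def iii_def by (rule recurrence_iff_funpow[where A = A and u = u and x = x])
  moreover have iii: "iii \<longleftrightarrow> u = (\<lambda>n. if n < 0 then 0 else (A ^^ nat n) x)"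
    unfolding iii_def fun_eq_iff by (meson not_less)
  moreover have "(iii \<longleftrightarrow> (shift u = (\<lambda>n. A (u n) + delta_m1 x n) \<and> u \<in> l2rho \<rho>)) \<and>
      (iii \<longleftrightarrow> (\<exists>R. is_l2rho_inverse \<rho> R (\<lambda>v n. shift v n - A (v n)) \<and>
                      u = R (delta_m1 x) \<and> u \<in> l2rho \<rho>))"
    if rho: "0 < \<rho>" "spectral_radius A < \<rho>" for \<rho>
  proof -
    obtain s M where "geometrically_bounded_op A \<rho> s M"
      using geometrically_bounded_op_exists[OF rho] by blast
    then interpret geometrically_bounded_op A \<rho> s M .
    show ?thesis
      unfolding iii solution_in_l2rho_iff l2rho_inverse_delta_m1_iff inv_shift_minus_delta_m1 by simp
  qed
  ultimately show ?thesis
    by blast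
qed

end
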